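(* Let $(X,d_X)$ be a geodesic metric space and $F\colon\mathbb{H}^n\to X$ satisfy hypotheses (1)–(4) with constants $\delta,\epsilon,R>0$: (1) each $F\circ\eta_x$ is a geodesic; (2) for distinct $x,x'$, $F\circ\eta_x$ and $F\circ\eta_{x'}$ are two sides of an ideal $\delta$-slim triangle in $X$; (3) $e^{-t}|x-x'|<\epsilon$ implies $d_X(F(x,t),F(x',t))\le R$; (4) $e^{-t_k}|x_k-x_k'|\to\infty$ implies $d_X(F(x_k,t_k),F(x_k',t_k))\to\infty$. Then there exists a constant $C_0=C_0(F)$ such that $t(r)-h_T\le C_0$ for every vertical triangle $T\subset\mathbb{H}^n$, where $r$ is the midpoint of the non-vertical side of $T$.
   Context: Exponential model $\mathbb{H}^n=\mathbb{R}^{n-1}\times\mathbb{R}$, coordinates $(x,t)$, metric $e^{-2t}|dx|^2+dt^2$; $\eta_x(t)=(x,t)$. An ideal $\delta$-slim triangle: three bi-infinite geodesics forming an ideal triangle, each side in the closed $\delta$-neighborhood of the union of the other two. A vertical triangle $T=\mathcal{P}\cup\mathcal{Q}\cup\mathcal{R}$ is an ideal triangle with vertical sides $\mathcal{P}=\eta_x(\mathbb{R})$, $\mathcal{Q}=\eta_{x'}(\mathbb{R})$, $x\ne x'$, and third side $\mathcal{R}$; its midpoint $r$ is the point of $\mathcal{R}$ of maximal $t$-coordinate $t(r)$. With $\Delta=\max\{3\delta,2R/\epsilon+R\}$, the displaced height is $h_T=\min\{t : d_X(F(x,t),F(\mathcal{Q}))\le\Delta\text{ or }d_X(F(\mathcal{P}),F(x',t))\le\Delta\}$,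 a finite number. *)

theory Defs
  imports "HOL-Analysis.Analysis"
begin

text \<open>Exponential model of hyperbolic space: points are pairs (x,t) with x in R^(n-1)
  (an arbitrary Euclidean space 'm) and t real; metric exp(-2t)|dx|^2 + dt^2.\<close>

definition eta :: "'m::euclidean_space \<Rightarrow> real \<Rightarrow> 'm \<times> real" where
  "eta x t = (x, t)"

definition bi_geodesic :: "(real \<Rightarrow> 'a::metric_space) \<Rightarrow> bool" where
  "bi_geodesic c \<longleftrightarrow> (\<forall>s t. dist (c s) (c t) = \<bar>s - t\<bar>)"

definition geodesic_space :: "'a::metric_space itself \<Rightarrow> bool" where
  "geodesic_space _ \<longleftrightarrow> (\<forall>p q :: 'a. \<exists>c :: real \<Rightarrow> 'a. c 0 = p \<and> c (dist p q) = q \<and>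
       (\<forall>s\<in>{0..dist p q}. \<forall>t\<in>{0..dist p q}. dist (c s) (c t) = \<bar>s - t\<bar>))"

definition asymptotic_rays :: "(real \<Rightarrow> 'a::metric_space) \<Rightarrow> (real \<Rightarrow> 'a) \<Rightarrow> bool" where
  "asymptotic_rays r1 r2 \<longleftrightarrow> (\<exists>C. \<forall>t\<ge>0. dist (r1 t) (r2 t) \<le> C)"

definition orientation_of :: "(real \<Rightarrow> 'a) \<Rightarrow> (real \<Rightarrow> 'a) \<Rightarrow> bool" where
  "orientation_of c c' \<longleftrightarrow> c' = c \<or> c' = (\<lambda>t. c (- t))"

definition ideal_triangle :: "(real \<Rightarrow> 'a::metric_space) \<Rightarrow> (real \<Rightarrow> 'a) \<Rightarrow> (real \<Rightarrow> 'a) \<Rightarrow> bool" where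
  "ideal_triangle a b c \<longleftrightarrow> bi_geodesic a \<and> bi_geodesic b \<and> bi_geodesic c \<and>
     (\<exists>a' b' c'. orientation_of a a' \<and> orientation_of b b' \<and> orientation_of c c' \<and>
        asymptotic_rays a' (\<lambda>t. b' (- t)) \<and>
        asymptotic_rays b' (\<lambda>t. c' (- t)) \<and>
        asymptotic_rays c' (\<lambda>t. a' (- t)))"

definition cnbhd :: "real \<Rightarrow> 'a::metric_space set \<Rightarrow> 'a set" where
  "cnbhd \<delta> S = {y. infdist y S \<le> \<delta>}"

definition ideal_slim_triangle :: "real \<Rightarrow> (real \<Rightarrow> 'a::metric_space) \<Rightarrow> (real \<Rightarrow> 'a) \<Rightarrow> (real \<Rightarrow> 'a) \<Rightarrow> bool" where
  "ideal_slim_triangle \<delta> a b c \<longleftrightarrow> ideal_triangle a b c \<and>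
     range a \<subseteq> cnbhd \<delta> (range b \<union> range c) \<and>
     range b \<subseteq> cnbhd \<delta> (range a \<union> range c) \<and>
     range c \<subseteq> cnbhd \<delta> (range a \<union> range b)"

text \<open>The non-vertical side of the vertical triangle with vertical sides over x and x':
  the hyperbolic geodesic joining the ideal points x and x', i.e. (in upper half-space
  coordinates y = exp t) the half circle over the segment [x,x'] centred at the midpoint.\<close>
definition third_side :: "'m::euclidean_space \<Rightarrow> 'm \<Rightarrow> ('m \<times> real) set" where
  "third_side x x' = {(z, t). \<exists>s\<in>{0<..<1}. z = (1 - s) *\<^sub>R x + s *\<^sub>R x' \<and>
       (norm (z - midpoint x x'))\<^sup>2 + (exp t)\<^sup>2 = (norm (x - x') / 2)\<^sup>2}"

text \<open>t(r): the maximal t-coordinate on the third side (height of its midpoint r).\<close>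
definition midpoint_height :: "'m::euclidean_space \<Rightarrow> 'm \<Rightarrow> real" where
  "midpoint_height x x' = Sup (snd ` third_side x x')"

definition displaced_height ::
  "('m::euclidean_space \<times> real \<Rightarrow> 'a::metric_space) \<Rightarrow> real \<Rightarrow> 'm \<Rightarrow> 'm \<Rightarrow> real" where
  "displaced_height F \<Delta> x x' =
     Inf {t. infdist (F (eta x t)) (F ` range (eta x')) \<le> \<Delta> \<or>
             infdist (F (eta x' t)) (F ` range (eta x)) \<le> \<Delta>}"

end

theory Submission
  imports Defs
begin

(* Fix distinct ideal points x, x' and put D = |x - x'|.
   (a) The midpoint of the semicircle over [x,x'] has height t(r) = ln (D/2).
   (b) If at height t the point F(x,t) is within Delta of the image line F(eta x'),
       then F(x,t) is within 2(Delta+1) + R of F(x',t): both image lines are geodesics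
       (H1) that are R-close at all large heights (H3), and two such fellow travellers
       are close at equal parameters as soon as one point of one is near the other.
   (c) By H4, bounded image distance at equal height forces a bounded scaled
       separation exp(-t) * D <= B, with B depending only on F and Delta.
   Hence every height in the set defining h_T satisfies t >= ln D - ln B, so
   t(r) - h_T <= ln B - ln 2 uniformly in the triangle. *)

lemma infdist_less_obtain:
  fixes p :: "'a::metric_space"
  assumes "A \<noteq> {}" and "infdist p A < r"
  shows "\<exists>a\<in>A. dist p a < r"
proof -
  have "(INF a\<in>A. dist p a) < r" using assms by (simp add: infdist_notempty)
  then show ?thesis
    using assms(1) by (subst (asm) cINF_less_iff) (auto intro: bdd_belowI[where m = 0])
qed

lemma exp_scaled_eventually_small:
  fixes D \<epsilon> :: real
  assumes "D > 0" and "\<epsilon> > 0"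
  shows "\<exists>u0. \<forall>u\<ge>u0. exp (- u) * D < \<epsilon>"
proof (intro exI allI impI)
  fix u assume u: "u \<ge> ln (D / \<epsilon>) + 1"
  have "exp (- u) * D \<le> exp (- (ln (D / \<epsilon>) + 1)) * D"
    using u \<open>D > 0\<close> by simp
  also have "\<dots> = exp (- 1) * \<epsilon>"
    using assms by (simp add: exp_diff exp_minus field_simps)
  also have "\<dots> < \<epsilon>" using \<open>\<epsilon> > 0\<close> by simp
  finally show "exp (- u) * D < \<epsilon>" .
qed

(* Two bi-infinite geodesics that are R-close at all parameters u >= u0: if a(t) is
   within Delta of some point b(s), then |s - t| <= Delta + R (compare both with a
   common late parameter u), hence a(t) is within 2 Delta + R of b(t). *)
lemma fellow_travellers_same_time:
  fixes a b :: "real \<Rightarrow> 'a::metric_space"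
  assumes geo_a: "bi_geodesic a" and geo_b: "bi_geodesic b"
    and close: "\<And>u. u \<ge> u0 \<Longrightarrow> dist (a u) (b u) \<le> R"
    and near: "dist (a t) (b s) \<le> \<Delta>"
  shows "dist (a t) (b t) \<le> 2 * \<Delta> + R"
proof -
  define u where "u = max u0 (max s t)"
  have da: "dist (a t) (a u) = u - t" and db: "dist (b s) (b u) = u - s"
    using geo_a geo_b by (auto simp: bi_geodesic_def u_def)
  have db': "dist (b s) (b t) = \<bar>s - t\<bar>" using geo_b by (simp add: bi_geodesic_def)
  have cu: "dist (a u) (b u) \<le> R" using close by (simp add: u_def)
  have "dist (a t) (a u) \<le> dist (a t) (b s) + dist (b s) (b u) + dist (b u) (a u)"
    using dist_triangle[of "a t" "a u" "b s"] dist_triangle[of "b s" "a u" "b u"] by linarith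
  moreover have "dist (b s) (b u) \<le> dist (b s) (a t) + dist (a t) (a u) + dist (a u) (b u)"
    using dist_triangle[of "b s" "b u" "a t"] dist_triangle[of "a t" "b u" "a u"] by linarith
  ultimately have "\<bar>s - t\<bar> \<le> \<Delta> + R"
    using da db cu near by (simp add: dist_commute)
  have "dist (a t) (b t) \<le> dist (a t) (b s) + dist (b s) (b t)"
    by (rule dist_triangle)
  with near db' \<open>\<bar>s - t\<bar> \<le> \<Delta> + R\<close> show ?thesis by linarith
qed

(* If psi tends to infinity along every sequence along which phi does, then phi is
   bounded on every sublevel set of psi (otherwise pick p_k with phi(p_k) > k). *)
lemma sublevel_bound_of_proper:
  fixes \<phi> \<psi> :: "'p \<Rightarrow> real"
  assumes proper: "\<And>p. filterlim (\<lambda>k. \<phi> (p k)) at_top sequentially \<Longrightarrow>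
                          filterlim (\<lambda>k. \<psi> (p k)) at_top sequentially"
  shows "\<exists>B>0. \<forall>p. \<psi> p \<le> M \<longrightarrow> \<phi> p \<le> B"
proof (rule ccontr)
  assume no_bound: "\<not> ?thesis"
  have "\<exists>p. \<psi> p \<le> M \<and> \<phi> p > real k + 1" for k :: nat
  proof -
    have "real k + 1 > 0" by simp
    with no_bound show ?thesis by (meson not_le)
  qed
  then obtain p where p: "\<And>k. \<psi> (p k) \<le> M" "\<And>k. \<phi> (p k) > real k + 1"
    by metis
  have "real k \<le> \<phi> (p k)" for k using p(2)[of k] by linarith
  then have "filterlim (\<lambda>k. \<phi> (p k)) at_top sequentially"
    by (intro filterlim_at_top_mono[OF filterlim_real_sequentially] always_eventually) auto
  then have "eventually (\<lambda>k. \<psi> (p k) \<ge> M + 1) sequentially"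
    using proper by (simp add: filterlim_at_top)
  then obtain k where "\<psi> (p k) \<ge> M + 1"
    using eventually_sequentially by auto
  with p(1)[of k] show False by linarith
qed

lemma midpoint_height_eq:
  fixes x x' :: "'m::euclidean_space"
  assumes "x \<noteq> x'"
  shows "midpoint_height x x' = ln (norm (x - x') / 2)"
  unfolding midpoint_height_def
proof (rule cSup_eq_maximum)
  have "(midpoint x x', ln (norm (x - x') / 2)) \<in> third_side x x'"
    unfolding third_side_def using assms
    by (auto intro!: bexI[where x = "1/2"] simp: midpoint_def scaleR_add_right)
  then show "ln (norm (x - x') / 2) \<in> snd ` third_side x x'"
    by force
next
  fix t assume "t \<in> snd ` third_side x x'"
  then obtain w where "w\<^sup>2 + (exp t)\<^sup>2 = (norm (x - x') / 2)\<^sup>2"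
    unfolding third_side_def by auto
  then have "(exp t)\<^sup>2 \<le> (norm (x - x') / 2)\<^sup>2"
    by (metis le_add_same_cancel2 zero_le_power2)
  then have "exp t \<le> norm (x - x') / 2"
    by (simp add: abs_le_square_iff)
  then show "t \<le> ln (norm (x - x') / 2)"
    using assms by (simp add: ln_ge_iff)
qed

lemma vertical_lines_eventually_close:
  fixes F :: "'m::euclidean_space \<times> real \<Rightarrow> 'a::metric_space"
  assumes H3: "\<And>x x' t. exp (- t) * norm (x - x') < \<epsilon> \<Longrightarrow>
               dist (F (x, t)) (F (x', t)) \<le> R"
    and "\<epsilon> > 0" and "x \<noteq> x'"
  obtains u0 where "\<And>u. u \<ge> u0 \<Longrightarrow> dist (F (x, u)) (F (x', u)) \<le> R"
proof -
  obtain u0 where "\<forall>u\<ge>u0. exp (- u) * norm (x - x') < \<epsilon>"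
    using exp_scaled_eventually_small[of "norm (x - x')" \<epsilon>] assms by auto
  with H3 that show thesis by blast
qed

lemma displaced_implies_close:
  fixes F :: "'m::euclidean_space \<times> real \<Rightarrow> 'a::metric_space"
  assumes H1: "\<And>x. bi_geodesic (F \<circ> eta x)"
    and H3: "\<And>x x' t. exp (- t) * norm (x - x') < \<epsilon> \<Longrightarrow>
               dist (F (x, t)) (F (x', t)) \<le> R"
    and "\<epsilon> > 0" and "x \<noteq> x'"
    and displaced: "infdist (F (eta x t)) (F ` range (eta x')) \<le> \<Delta>"
  shows "dist (F (x, t)) (F (x', t)) \<le> 2 * (\<Delta> + 1) + R"
proof -
  obtain u0 where close: "\<And>u. u \<ge> u0 \<Longrightarrow> dist (F (x, u)) (F (x', u)) \<le> R"
    using vertical_lines_eventually_close[where F = F and x = x and x' = x', OF H3 \<open>\<epsilon> > 0\<close> \<open>x \<noteq> x'\<close>] by blast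
  obtain s where "dist (F (x, t)) (F (x', s)) < \<Delta> + 1"
    using infdist_less_obtain[of "F ` range (eta x')" "F (eta x t)" "\<Delta> + 1"] displaced
    by (auto simp: eta_def)
  then show ?thesis
    using fellow_travellers_same_time[OF H1[of x] H1[of x'], of u0 R t s "\<Delta> + 1"] close
    by (simp add: eta_def)
qed

(* Step (c) applied to the set defining h_T: it is nonempty (large heights belong
   to it) and all its elements t satisfy exp(-t) |x - x'| <= B. *)
lemma displaced_height_lower_bound:
  fixes F :: "'m::euclidean_space \<times> real \<Rightarrow> 'a::metric_space"
  assumes H1: "\<And>x. bi_geodesic (F \<circ> eta x)"
    and H3: "\<And>x x' t. exp (- t) * norm (x - x') < \<epsilon> \<Longrightarrow>
               dist (F (x, t)) (F (x', t)) \<le> R"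
    and "\<epsilon> > 0" and "x \<noteq> x'" and "R \<le> \<Delta>" and "B > 0"
    and bound: "\<And>x x' t. dist (F (x, t)) (F (x', t)) \<le> 2 * (\<Delta> + 1) + R \<Longrightarrow>
               exp (- t) * norm (x - x') \<le> B"
  shows "ln (norm (x - x')) - ln B \<le> displaced_height F \<Delta> x x'"
  unfolding displaced_height_def
proof (rule cInf_greatest)
  obtain u0 where "\<And>u. u \<ge> u0 \<Longrightarrow> dist (F (x, u)) (F (x', u)) \<le> R"
    using vertical_lines_eventually_close[where F = F and x = x and x' = x', OF H3]
      \<open>\<epsilon> > 0\<close> \<open>x \<noteq> x'\<close> by blast
  then have "dist (F (x, u0)) (F (x', u0)) \<le> R" by simp
  then have "infdist (F (eta x u0)) (F ` range (eta x')) \<le> \<Delta>"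
    using \<open>R \<le> \<Delta>\<close> by (intro infdist_le2[where a = "F (x', u0)"]) (auto simp: eta_def)
  then show "{t. infdist (F (eta x t)) (F ` range (eta x')) \<le> \<Delta> \<or>
                 infdist (F (eta x' t)) (F ` range (eta x)) \<le> \<Delta>} \<noteq> {}"
    by blast
next
  fix t
  assume "t \<in> {t. infdist (F (eta x t)) (F ` range (eta x')) \<le> \<Delta> \<or>
                 infdist (F (eta x' t)) (F ` range (eta x)) \<le> \<Delta>}"
  then have "exp (- t) * norm (x - x') \<le> B"
    using displaced_implies_close[OF H1 H3 \<open>\<epsilon> > 0\<close>, of x x' t \<Delta>]
      displaced_implies_close[OF H1 H3 \<open>\<epsilon> > 0\<close>, of x' x t \<Delta>]
      bound[of x t x'] bound[of x' t x] \<open>x \<noteq> x'\<close>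
    by (auto simp: norm_minus_commute)
  then have "ln (exp (- t) * norm (x - x')) \<le> ln B"
    using \<open>x \<noteq> x'\<close> \<open>B > 0\<close> by simp
  then show "ln (norm (x - x')) - ln B \<le> t"
    using \<open>x \<noteq> x'\<close> by (simp add: ln_mult)
qed

(* Main theorem: the constant C0 = ln B - ln 2, with B from the properness bound. *)
theorem claim2p4:
  fixes F :: "'m::euclidean_space \<times> real \<Rightarrow> 'a::metric_space"
    and \<delta> \<epsilon> R :: real
  assumes geod_space: "geodesic_space TYPE('a)"
    and pos: "\<delta> > 0" "\<epsilon> > 0" "R > 0"
    and H1: "\<And>x. bi_geodesic (F \<circ> eta x)"
    and H2: "\<And>x x'. x \<noteq> x' \<Longrightarrow>
               \<exists>c. ideal_slim_triangle \<delta> (F \<circ> eta x) (F \<circ> eta x') c"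
    and H3: "\<And>x x' t. exp (- t) * norm (x - x') < \<epsilon> \<Longrightarrow>
               dist (F (x, t)) (F (x', t)) \<le> R"
    and H4: "\<And>xs xs' ts. filterlim (\<lambda>k::nat. exp (- ts k) * norm (xs k - xs' k)) at_top sequentially \<Longrightarrow>
               filterlim (\<lambda>k. dist (F (xs k, ts k)) (F (xs' k, ts k))) at_top sequentially"
  shows "\<exists>C0. \<forall>x x'. x \<noteq> x' \<longrightarrow>
           midpoint_height x x' - displaced_height F (max (3 * \<delta>) (2 * R / \<epsilon> + R)) x x' \<le> C0"
proof -
  define \<Delta> where "\<Delta> = max (3 * \<delta>) (2 * R / \<epsilon> + R)"
  have "0 \<le> 2 * R / \<epsilon>"
    using pos by simp
  then have "R \<le> \<Delta>"
    unfolding \<Delta>_def by linarith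
  have proper: "filterlim (\<lambda>k. dist (F (fst (p k), snd (snd (p k)))) (F (fst (snd (p k)), snd (snd (p k)))))
      at_top sequentially"
    if "filterlim (\<lambda>k. exp (- snd (snd (p k))) * norm (fst (p k) - fst (snd (p k)))) at_top sequentially"
    for p :: "nat \<Rightarrow> 'm \<times> 'm \<times> real"
    using H4[OF that] .
  obtain B where "B > 0" and bound: "\<forall>p. dist (F (fst p, snd (snd p))) (F (fst (snd p), snd (snd p)))
      \<le> 2 * (\<Delta> + 1) + R \<longrightarrow> exp (- snd (snd p)) * norm (fst p - fst (snd p)) \<le> B"
    using sublevel_bound_of_proper[where
        \<phi> = "\<lambda>p. exp (- snd (snd p)) * norm (fst p - fst (snd p))" and
        \<psi> = "\<lambda>p. dist (F (fst p, snd (snd p))) (F (fst (snd p), snd (snd p)))", OF proper]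
    by blast
  have B: "exp (- t) * norm (x - x') \<le> B"
    if "dist (F (x, t)) (F (x', t)) \<le> 2 * (\<Delta> + 1) + R" for x x' t
    using bound[rule_format, of "(x, x', t)"] that by simp
  have "midpoint_height x x' - displaced_height F \<Delta> x x' \<le> ln B - ln 2"
    if "x \<noteq> x'" for x x' :: 'm
    using midpoint_height_eq[OF that]
      displaced_height_lower_bound[OF H1 H3 \<open>\<epsilon> > 0\<close> that \<open>R \<le> \<Delta>\<close> \<open>B > 0\<close> B]
      that by (simp add: ln_div)
  then show ?thesis
    unfolding \<Delta>_def by blast
qed

end
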